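(* Consider the regression model $Y=f(W,X)+\varepsilon$ with two-layer network $f(W,x)=1_p^\top\sigma(Wx)=\sum_{i=1}^p\sigma(W_i^\top x)$, where $x\in\mathbb{R}^d$, $W\in\mathbb{R}^{p\times d}$ has rows $W_i$, $\sigma$ is applied elementwise, and the network is trained with the least-squares loss $(Y-f(W,X))^2$. Let $\nabla f(W,x)=\sigma'(Wx)x^\top\in\mathbb{R}^{p\times d}$ and define the Fisher information tensor $I_W=\mathbb{E}[\nabla f(W,X)\otimes\nabla f(W,X)]$ (a $p^2\times d^2$ array with entries $I_W((i,i'),(j,j'))=\mathbb{E}[\sigma'(W_i^\top X)\sigma'(W_{i'}^\top X)X_jX_{j'}]$). Let $G=\{g_0,\dots,g_{d-1}\}$ be the group of circular shifts of $\mathbb{R}^d$, $(g_ix)_{(j+i)\bmod d}=x_j$, with the uniform distribution $\mathbb{Q}$, and let $\bar I_W=\mathbb{E}_X\big[(\mathbb{E}_{g}\nabla f(W,gX))\otimes(\mathbb{E}_g\nabla f(W,gX))\big]$. Then: 1. $I_W=\mathbb{E}\big[(\sigma'(WX)\otimes\sigma'(WX))\cdot(X\otimes X)^\top\big]$; if moreover $\sigma(u)=u^2/2$, then $I_W=(W\otimes W)\cdot\mathbb{E}(XX^\top\otimes XX^\top)$. 2. Assume $\sigma(u)=u^2/2$. For $v\in\mathbb{R}^d$ let $C_v$ be the circulant matrix with entries $C_v(i,j)=v_{i-j+1}$ (indices modulo $d$, taken in $\{1,\dots,d\}$). Then $\bar I_W=(W\otimes W)\cdot d^{-2}\,\mathbb{E}(C_XC_X^\top\otimes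 C_XC_X^\top)$. If furthermore $X\sim\mathcal{N}(0,I_d)$, then $$\bar I_W=(W\otimes W)\cdot F_2^*\cdot(F_2^2\odot M)\cdot F_2^*,$$ where $F$ is the $d\times d$ DFT matrix with entries $F_{j,k}=d^{-1/2}\exp(-2\pi\mathrm{i}(j-1)(k-1)/d)$ and rows $F_1,\dots,F_d$, $F_2=F\otimes F$, $F_2^2=F_2F_2$, $F_2^*$ is the entrywise complex conjugate of $F_2$, $\odot$ is the entrywise product, and $M$ is the $d^2\times d^2$ matrix with rows indexed by $(i,j)$, columns by $(i',j')$, and entries $$M_{iji'j'}=F_i^\top F_j\cdot F_{i'}^\top F_{j'}+F_i^\top F_{j'}\cdot F_{i'}^\top F_j+F_i^\top F_{i'}\cdot F_j^\top F_{j'}.$$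
   Context: $\otimes$ denotes the Kronecker product; for $p\times d$ matrices $A,B$, $A\otimes B$ is the $p^2\times d^2$ array with entries $(A\otimes B)((i,i'),(j,j'))=A_{ij}B_{i'j'}$. All expectations are assumed finite. *)

theory Defs
  imports "HOL-Probability.Probability"
begin

text \<open>Conventions: all indices are 0-based natural numbers. A matrix is a function
  nat => nat => 'a (only entries with indices in range matter); a vector is nat => 'a.
  Arrays indexed by pairs (such as Kronecker products, p^2 x d^2 arrays) are functions
  (nat * nat) => (nat * nat) => 'a, row index first.\<close>

definition mat_mult :: "nat \<Rightarrow> (nat \<Rightarrow> nat \<Rightarrow> 'a::comm_semiring_1) \<Rightarrow> (nat \<Rightarrow> nat \<Rightarrow> 'a) \<Rightarrow> nat \<Rightarrow> nat \<Rightarrow> 'a" where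
  "mat_mult n A B = (\<lambda>i j. \<Sum>k<n. A i k * B k j)"

definition mat_transpose :: "(nat \<Rightarrow> nat \<Rightarrow> 'a) \<Rightarrow> nat \<Rightarrow> nat \<Rightarrow> 'a" where
  "mat_transpose A = (\<lambda>i j. A j i)"

text \<open>A vector viewed as a column matrix (single column index 0).\<close>
definition colvec :: "(nat \<Rightarrow> 'a) \<Rightarrow> nat \<Rightarrow> nat \<Rightarrow> 'a" where
  "colvec v = (\<lambda>i j. v i)"

definition kron :: "(nat \<Rightarrow> nat \<Rightarrow> 'a::times) \<Rightarrow> (nat \<Rightarrow> nat \<Rightarrow> 'a) \<Rightarrow> nat \<times> nat \<Rightarrow> nat \<times> nat \<Rightarrow> 'a" where
  "kron A B = (\<lambda>(i, i') (j, j'). A i j * B i' j')"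

definition pmat_mult :: "(nat \<times> nat) set \<Rightarrow> (nat \<times> nat \<Rightarrow> nat \<times> nat \<Rightarrow> 'a::comm_semiring_1)
    \<Rightarrow> (nat \<times> nat \<Rightarrow> nat \<times> nat \<Rightarrow> 'a) \<Rightarrow> nat \<times> nat \<Rightarrow> nat \<times> nat \<Rightarrow> 'a" where
  "pmat_mult K A B = (\<lambda>r c. \<Sum>k\<in>K. A r k * B k c)"

definition pmat_transpose :: "(nat \<times> nat \<Rightarrow> nat \<times> nat \<Rightarrow> 'a) \<Rightarrow> nat \<times> nat \<Rightarrow> nat \<times> nat \<Rightarrow> 'a" where
  "pmat_transpose A = (\<lambda>r c. A c r)"

definition pexp :: "'w measure \<Rightarrow> ('w \<Rightarrow> nat \<times> nat \<Rightarrow> nat \<times> nat \<Rightarrow> real) \<Rightarrow> nat \<times> nat \<Rightarrow> nat \<times> nat \<Rightarrow> real" where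
  "pexp M A = (\<lambda>r c. \<integral>\<omega>. A \<omega> r c \<partial>M)"

definition mat_vec :: "nat \<Rightarrow> (nat \<Rightarrow> nat \<Rightarrow> real) \<Rightarrow> (nat \<Rightarrow> real) \<Rightarrow> nat \<Rightarrow> real" where
  "mat_vec d W x = (\<lambda>i. \<Sum>k<d. W i k * x k)"

definition grad_f :: "nat \<Rightarrow> (real \<Rightarrow> real) \<Rightarrow> (nat \<Rightarrow> nat \<Rightarrow> real) \<Rightarrow> (nat \<Rightarrow> real) \<Rightarrow> nat \<Rightarrow> nat \<Rightarrow> real" where
  "grad_f d \<sigma>' W x = (\<lambda>i j. \<sigma>' (mat_vec d W x i) * x j)"

text \<open>Circular shift g_i: (g_i x)_{(j+i) mod d} = x_j, i.e. (g_i x)_k = x_{(k-i) mod d}.\<close>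
definition cshift :: "nat \<Rightarrow> nat \<Rightarrow> (nat \<Rightarrow> real) \<Rightarrow> nat \<Rightarrow> real" where
  "cshift d i x = (\<lambda>k. x ((k + d - i mod d) mod d))"

definition avg_grad_f :: "nat \<Rightarrow> (real \<Rightarrow> real) \<Rightarrow> (nat \<Rightarrow> nat \<Rightarrow> real) \<Rightarrow> (nat \<Rightarrow> real) \<Rightarrow> nat \<Rightarrow> nat \<Rightarrow> real" where
  "avg_grad_f d \<sigma>' W x = (\<lambda>i j. (\<Sum>g<d. grad_f d \<sigma>' W (cshift d g x) i j) / real d)"

definition fisher :: "'w measure \<Rightarrow> nat \<Rightarrow> (real \<Rightarrow> real) \<Rightarrow> (nat \<Rightarrow> nat \<Rightarrow> real) \<Rightarrow> ('w \<Rightarrow> nat \<Rightarrow> real) \<Rightarrow> nat \<times> nat \<Rightarrow> nat \<times> nat \<Rightarrow> real" where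
  "fisher M d \<sigma>' W X = pexp M (\<lambda>\<omega>. kron (grad_f d \<sigma>' W (X \<omega>)) (grad_f d \<sigma>' W (X \<omega>)))"

definition fisher_bar :: "'w measure \<Rightarrow> nat \<Rightarrow> (real \<Rightarrow> real) \<Rightarrow> (nat \<Rightarrow> nat \<Rightarrow> real) \<Rightarrow> ('w \<Rightarrow> nat \<Rightarrow> real) \<Rightarrow> nat \<times> nat \<Rightarrow> nat \<times> nat \<Rightarrow> real" where
  "fisher_bar M d \<sigma>' W X = pexp M (\<lambda>\<omega>. kron (avg_grad_f d \<sigma>' W (X \<omega>)) (avg_grad_f d \<sigma>' W (X \<omega>)))"

text \<open>Circulant matrix C_v(i,j) = v_{(i-j) mod d} (0-based version of v_{i-j+1}).\<close>
definition circulant :: "nat \<Rightarrow> (nat \<Rightarrow> real) \<Rightarrow> nat \<Rightarrow> nat \<Rightarrow> real" where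
  "circulant d v = (\<lambda>i j. v ((i + d - j mod d) mod d))"

text \<open>DFT matrix F_{j,k} = d^{-1/2} exp(-2 pi i j k / d) (0-based).\<close>
definition dft :: "nat \<Rightarrow> nat \<Rightarrow> nat \<Rightarrow> complex" where
  "dft d = (\<lambda>j k. exp (- 2 * complex_of_real pi * \<i> * of_nat j * of_nat k / of_nat d) / complex_of_real (sqrt (real d)))"

text \<open>F_i^T F_j for rows F_i, F_j (plain transpose, no conjugation).\<close>
definition dft_dot :: "nat \<Rightarrow> nat \<Rightarrow> nat \<Rightarrow> complex" where
  "dft_dot d i j = (\<Sum>k<d. dft d i k * dft d j k)"

definition Mmat :: "nat \<Rightarrow> nat \<times> nat \<Rightarrow> nat \<times> nat \<Rightarrow> complex" where
  "Mmat d = (\<lambda>(i, j) (i', j'). dft_dot d i j * dft_dot d i' j' + dft_dot d i j' * dft_dot d i' j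
                               + dft_dot d i i' * dft_dot d j j')"

definition pidx :: "nat \<Rightarrow> (nat \<times> nat) set" where
  "pidx d = {0..<d} \<times> {0..<d}"

end

theory Submission
  imports Defs "HOL-Library.Real_Mod"
begin

(* For sigma(u) = u^2/2 the gradient grad f(W,x) = W x x^T is linear in W, and averaging over
   the circular shifts turns x x^T into d^-1 C_x C_x^T, because the shifted copies of x are the
   columns of C_x. The mixed-product rule for Kronecker products then pulls W (x) W out of the
   expectation. For X ~ N(0, I_d), Isserlis' theorem evaluates the fourth moments, so every entry
   of d^-2 E(C_X C_X^T (x) C_X C_X^T) is delta(u) delta(v) + (delta(u - v) + delta(u + v)) / d,
   with u = j - a, v = j' - b and delta the Kronecker delta modulo d. On the Fourier side F^2 is
   the reflection J: r -> -r (mod d), so F_2^2 (.) M = diag(g) (J (x) J) with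
   g(r0, r1) = 1 + delta(r0 + r1) + delta(r0 - r1); since (J (x) J) F_2^* = F_2, the right-hand
   side is F_2^* diag(g) F_2, and orthogonality of the characters gives the same deltas. *)

section \<open>Pair-indexed matrices\<close>

lemma sum_pidx: "(\<Sum>k\<in>pidx n. f k) = (\<Sum>a<n. \<Sum>b<n. f (a, b))"
  unfolding pidx_def atLeast0LessThan by (simp add: sum.cartesian_product)

lemma pmat_mult_assoc: "pmat_mult K (pmat_mult K A B) C = pmat_mult K A (pmat_mult K B C)"
  unfolding pmat_mult_def sum_distrib_left sum_distrib_right mult.assoc by (intro ext sum.swap)

lemma pmat_mult_cong:
  "(\<And>k. k \<in> K \<Longrightarrow> B k c = B' k c) \<Longrightarrow> pmat_mult K A B r c = pmat_mult K A B' r c"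
  unfolding pmat_mult_def by simp

lemma of_real_pmat_mult:
  "of_real (pmat_mult K A B r c)
     = pmat_mult K (\<lambda>r c. of_real (A r c)) (\<lambda>r c. of_real (B r c) :: 'a::{real_algebra_1, comm_semiring_1}) r c"
  unfolding pmat_mult_def by simp

lemma kron_of_real:
  "kron (\<lambda>a b. of_real (A a b)) (\<lambda>a b. of_real (B a b)) = (\<lambda>r c. of_real (kron A B r c) :: 'a::real_algebra_1)"
  unfolding kron_def by (simp add: fun_eq_iff)

lemma kron_mat_mult:
  "kron (mat_mult n A B) (mat_mult n C D) = pmat_mult (pidx n) (kron A C) (kron B D)"
  by (auto simp: kron_def mat_mult_def pmat_mult_def sum_pidx sum_product mult_ac intro!: ext sum.cong)

lemma pexp_pmat_mult_left:
  assumes "finite K" "\<And>k. k \<in> K \<Longrightarrow> integrable M (\<lambda>\<omega>. B \<omega> k c)"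
  shows "pexp M (\<lambda>\<omega>. pmat_mult K A (B \<omega>)) r c = pmat_mult K A (pexp M B) r c"
  unfolding pexp_def pmat_mult_def using assms by (simp add: Bochner_Integration.integral_sum)

lemma pexp_kron_mat_mult_left:
  assumes "\<And>k. k \<in> pidx n \<Longrightarrow> integrable M (\<lambda>\<omega>. kron (A \<omega>) (A \<omega>) k c)"
  shows "pexp M (\<lambda>\<omega>. kron (mat_mult n W (A \<omega>)) (mat_mult n W (A \<omega>))) r c
       = pmat_mult (pidx n) (kron W W) (pexp M (\<lambda>\<omega>. kron (A \<omega>) (A \<omega>))) r c"
  unfolding kron_mat_mult by (rule pexp_pmat_mult_left) (auto simp: pidx_def assms)

section \<open>Fisher information of the network\<close>

lemma fisher_eq_pexp_kron:
  "fisher M d \<sigma>' W X (i, i') (j, j') =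
     pexp M (\<lambda>\<omega>. pmat_mult {(0, 0)}
               (kron (colvec (\<lambda>k. \<sigma>' (mat_vec d W (X \<omega>) k))) (colvec (\<lambda>k. \<sigma>' (mat_vec d W (X \<omega>) k))))
               (pmat_transpose (kron (colvec (X \<omega>)) (colvec (X \<omega>))))) (i, i') (j, j')"
  by (simp add: fisher_def pexp_def kron_def grad_f_def pmat_mult_def pmat_transpose_def colvec_def mult_ac)

lemma derivative_of_half_square:
  assumes "\<forall>u. (\<sigma> has_real_derivative \<sigma>' u) (at u)" "\<sigma> = (\<lambda>u. u\<^sup>2 / 2)"
  shows "\<sigma>' = (\<lambda>u. u)"
proof
  fix u :: real
  have "((\<lambda>u::real. u\<^sup>2 / 2) has_real_derivative u) (at u)"
    by (auto intro!: derivative_eq_intros)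
  then show "\<sigma>' u = u" using assms DERIV_unique by metis
qed

abbreviation outer :: "(nat \<Rightarrow> real) \<Rightarrow> nat \<Rightarrow> nat \<Rightarrow> real" where
  "outer x \<equiv> mat_mult 1 (colvec x) (mat_transpose (colvec x))"

abbreviation circulant_gram :: "nat \<Rightarrow> (nat \<Rightarrow> real) \<Rightarrow> nat \<Rightarrow> nat \<Rightarrow> real" where
  "circulant_gram d x \<equiv> mat_mult d (circulant d x) (mat_transpose (circulant d x))"

lemma grad_f_linear: "grad_f d (\<lambda>u. u) W x = mat_mult d W (outer x)"
  by (auto simp: grad_f_def mat_vec_def mat_mult_def colvec_def mat_transpose_def sum_distrib_right mult.assoc)

lemma cshift_eq_circulant: "cshift d g x k = circulant d x k g"
  unfolding cshift_def circulant_def ..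

lemma avg_grad_f_linear:
  "avg_grad_f d (\<lambda>u. u) W x = mat_mult d W (\<lambda>k j. circulant_gram d x k j / real d)"
proof (intro ext)
  fix i j
  have "(\<Sum>g<d. grad_f d (\<lambda>u. u) W (cshift d g x) i j)
      = (\<Sum>g<d. \<Sum>k<d. W i k * (circulant d x k g * circulant d x j g))"
    unfolding grad_f_def mat_vec_def cshift_eq_circulant sum_distrib_right by (simp add: mult.assoc)
  also have "\<dots> = (\<Sum>k<d. W i k * circulant_gram d x k j)"
    unfolding mat_mult_def mat_transpose_def sum_distrib_left by (rule sum.swap)
  finally show "avg_grad_f d (\<lambda>u. u) W x i j = mat_mult d W (\<lambda>k j. circulant_gram d x k j / real d) i j"
    unfolding avg_grad_f_def by (simp add: mat_mult_def[of d W] sum_divide_distrib)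
qed

lemma fisher_linear:
  assumes "\<forall>a<d. \<forall>b<d. \<forall>c<d. \<forall>e<d. integrable M (\<lambda>\<omega>. X \<omega> a * X \<omega> b * X \<omega> c * X \<omega> e)"
    and "j < d" "j' < d"
  shows "fisher M d (\<lambda>u. u) W X r (j, j')
       = pmat_mult (pidx d) (kron W W) (pexp M (\<lambda>\<omega>. kron (outer (X \<omega>)) (outer (X \<omega>)))) r (j, j')"
  unfolding fisher_def grad_f_linear
proof (rule pexp_kron_mat_mult_left)
  fix k assume "k \<in> pidx d"
  then show "integrable M (\<lambda>\<omega>. kron (outer (X \<omega>)) (outer (X \<omega>)) k (j, j'))"
    using assms by (auto simp: pidx_def kron_def mat_mult_def colvec_def mat_transpose_def mult.assoc)
qed

lemma integrable_kron_circulant_gram: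
  assumes "d > 0"
    and "\<forall>a<d. \<forall>b<d. \<forall>c<d. \<forall>e<d. integrable M (\<lambda>\<omega>. X \<omega> a * X \<omega> b * X \<omega> c * X \<omega> e)"
  shows "integrable M (\<lambda>\<omega>. kron (circulant_gram d (X \<omega>)) (circulant_gram d (X \<omega>)) r c)"
proof -
  obtain a b j j' where rc: "r = (a, b)" "c = (j, j')" by (cases r, cases c) auto
  have "kron (circulant_gram d x) (circulant_gram d x) r c
      = (\<Sum>m<d. \<Sum>n<d. circulant d x a m * circulant d x j m * circulant d x b n * circulant d x j' n)" for x
    unfolding rc kron_def mat_mult_def mat_transpose_def sum_product by (simp add: mult.assoc)
  moreover have "integrable M (\<lambda>\<omega>. circulant d (X \<omega>) a m * circulant d (X \<omega>) j m
                                     * circulant d (X \<omega>) b n * circulant d (X \<omega>) j' n)" for m n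
    using assms unfolding circulant_def by simp
  ultimately show ?thesis by simp
qed

lemma fisher_bar_linear:
  assumes "d > 0"
    and "\<forall>a<d. \<forall>b<d. \<forall>c<d. \<forall>e<d. integrable M (\<lambda>\<omega>. X \<omega> a * X \<omega> b * X \<omega> c * X \<omega> e)"
  shows "fisher_bar M d (\<lambda>u. u) W X r c
       = pmat_mult (pidx d) (kron W W)
           (\<lambda>k c. pexp M (\<lambda>\<omega>. kron (circulant_gram d (X \<omega>)) (circulant_gram d (X \<omega>))) k c / (real d)\<^sup>2) r c"
proof -
  have scale: "kron (\<lambda>k j. A k j / real d) (\<lambda>k j. A k j / real d) = (\<lambda>k c. kron A A k c / (real d)\<^sup>2)" for A
    by (simp add: kron_def power2_eq_square fun_eq_iff)
  show ?thesis
    unfolding fisher_bar_def avg_grad_f_linear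
    by (subst pexp_kron_mat_mult_left)
      (simp_all add: scale pexp_def integrable_kron_circulant_gram[OF assms])
qed

section \<open>Kronecker deltas modulo \<open>d\<close>\<close>

definition delta_mod :: "nat \<Rightarrow> int \<Rightarrow> 'a::zero_neq_one" where
  "delta_mod d n = of_bool (int d dvd n)"

lemma delta_mod_cong: "int d dvd (x - y) \<Longrightarrow> delta_mod d x = delta_mod d y"
  unfolding delta_mod_def using dvd_add_right_iff[of "int d" "x - y" y] by simp

lemma delta_mod_uminus [simp]: "delta_mod d (- x) = delta_mod d x"
  unfolding delta_mod_def by simp

lemma of_real_delta_mod: "of_real (delta_mod d x) = delta_mod d x"
  unfolding delta_mod_def by simp

lemma sum_delta_mod_periodic:
  fixes h :: "int \<Rightarrow> 'a::comm_ring_1"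
  assumes "d > 0" and periodic: "\<And>x y. int d dvd (x - y) \<Longrightarrow> h x = h y"
  shows "(\<Sum>c<d. delta_mod d (s + int c) * h (int c)) = h (- s)"
proof -
  define c0 where "c0 = nat ((- s) mod int d)"
  have c0: "c0 < d" "int c0 = (- s) mod int d"
    using assms(1) unfolding c0_def by (simp_all add: nat_less_iff)
  have "int d dvd (s + int c) \<longleftrightarrow> c = c0" if "c < d" for c
  proof -
    have "int d dvd (s + int c) \<longleftrightarrow> int c mod int d = (- s) mod int d"
      by (metis add.commute diff_minus_eq_add mod_eq_dvd_iff)
    also have "int c mod int d = int c" using that by simp
    finally show ?thesis by (simp add: c0(2)[symmetric])
  qed
  then have "(\<Sum>c<d. delta_mod d (s + int c) * h (int c)) = (\<Sum>c<d. if c = c0 then h (int c0) else 0)"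
    by (intro sum.cong) (auto simp: delta_mod_def)
  also have "\<dots> = h (int c0)"
    using c0(1) by simp
  also have "\<dots> = h (- s)"
  proof (rule periodic)
    have "int c0 - - s = - (int d * ((- s) div int d))"
      using mod_mult_div_eq[of "- s" "int d"] c0(2) by linarith
    then show "int d dvd (int c0 - - s)" by simp
  qed
  finally show ?thesis .
qed

lemma sum_sum_delta_mod_diff:
  assumes "d > 0"
  shows "(\<Sum>m<d. \<Sum>n<d. delta_mod d ((\<alpha> - int m) - (\<beta> - int n)) * delta_mod d ((\<gamma> - int m) - (\<epsilon> - int n)))
       = of_nat d * (delta_mod d ((\<gamma> - \<alpha>) - (\<epsilon> - \<beta>)) :: 'a::comm_ring_1)"
proof -
  have "(\<Sum>n<d. delta_mod d ((\<alpha> - int m) - (\<beta> - int n)) * delta_mod d ((\<gamma> - int m) - (\<epsilon> - int n)))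
      = (delta_mod d ((\<gamma> - \<alpha>) - (\<epsilon> - \<beta>)) :: 'a)" for m
  proof -
    have split: "(\<alpha> - int m) - (\<beta> - int n) = (\<alpha> - int m - \<beta>) + int n"
      "(\<gamma> - int m) - (\<epsilon> - int n) = (\<gamma> - int m - \<epsilon>) + int n" for n
      by simp_all
    have "(\<Sum>n<d. delta_mod d ((\<alpha> - int m - \<beta>) + int n) * delta_mod d ((\<gamma> - int m - \<epsilon>) + int n))
        = (delta_mod d ((\<gamma> - int m - \<epsilon>) + - (\<alpha> - int m - \<beta>)) :: 'a)"
      by (rule sum_delta_mod_periodic[OF assms, where h = "\<lambda>c. delta_mod d ((\<gamma> - int m - \<epsilon>) + c)"])
        (simp add: delta_mod_cong)
    also have "(\<gamma> - int m - \<epsilon>) + - (\<alpha> - int m - \<beta>) = (\<gamma> - \<alpha>) - (\<epsilon> - \<beta>)"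
      by simp
    finally show ?thesis unfolding split .
  qed
  then show ?thesis by simp
qed

lemma circulant_index_eq:
  assumes "m < d" "n < d"
  shows "(a + d - m mod d) mod d = (b + d - n mod d) mod d \<longleftrightarrow> int d dvd ((int a - int m) - (int b - int n))"
proof -
  have index: "int ((a + d - m mod d) mod d) = (int a - int m) mod int d" if "m < d" for a m
  proof -
    have "int (a + d - m mod d) = (int a - int m) + int d" using that by simp
    then show ?thesis by (simp only: zmod_int) simp
  qed
  have "(a + d - m mod d) mod d = (b + d - n mod d) mod d
      \<longleftrightarrow> int ((a + d - m mod d) mod d) = int ((b + d - n mod d) mod d)"
    by (simp only: of_nat_eq_iff)
  also have "\<dots> \<longleftrightarrow> (int a - int m) mod int d = (int b - int n) mod int d"
    by (simp only: index assms)
  also have "\<dots> \<longleftrightarrow> int d dvd ((int a - int m) - (int b - int n))"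
    by (rule mod_eq_dvd_iff)
  finally show ?thesis .
qed

section \<open>Gaussian fourth moments\<close>

context prob_space
begin

lemma std_normal_power_integral:
  assumes "distributed M lborel Y std_normal_density"
  shows "integrable M (\<lambda>\<omega>. Y \<omega> ^ n)"
    and "(\<integral>\<omega>. Y \<omega> ^ n \<partial>M) = (\<integral>x. std_normal_density x * x ^ n \<partial>lborel)"
  using distributed_integrable[OF assms, of "\<lambda>x. x ^ n"] distributed_integral[OF assms, of "\<lambda>x. x ^ n"]
    integrable_std_normal_moment[of n] by simp_all

lemma std_normal_fourth_moment:
  assumes indep: "indep_vars (\<lambda>_. borel) Y I"
    and normal: "\<forall>j\<in>I. distributed M lborel (Y j) std_normal_density"
    and "a \<in> I" "b \<in> I" "c \<in> I" "e \<in> I"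
  shows "integrable M (\<lambda>\<omega>. Y a \<omega> * Y b \<omega> * Y c \<omega> * Y e \<omega>)"
    and "(\<integral>\<omega>. Y a \<omega> * Y b \<omega> * Y c \<omega> * Y e \<omega> \<partial>M)
         = of_bool (a = b) * of_bool (c = e) + of_bool (a = c) * of_bool (b = e) + of_bool (a = e) * of_bool (b = c)"
proof -
  define m where "m n = (\<integral>x. std_normal_density x * x ^ n \<partial>lborel)" for n
  have m: "m (Suc 0) = 0" "m (Suc (Suc 0)) = 1" "m (Suc (Suc (Suc 0))) = 0" "m (Suc (Suc (Suc (Suc 0)))) = 3"
    unfolding m_def
    using integral_std_normal_moment_odd[of 0] integral_std_normal_moment_odd[of 1]
      integral_std_normal_moment_even[of 1] integral_std_normal_moment_even[of 2]
    by (simp_all only: numeral_eq_Suc mult_Suc_right mult_Suc add_0 mult_0_right) (simp_all add: fact_numeral)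
  define N where "N = {#a, b, c, e#}"
  define S where "S = set_mset N"
  have prod: "Y a \<omega> * Y b \<omega> * Y c \<omega> * Y e \<omega> = (\<Prod>k\<in>S. Y k \<omega> ^ count N k)" for \<omega>
  proof -
    have "Y a \<omega> * Y b \<omega> * Y c \<omega> * Y e \<omega> = prod_mset (image_mset (\<lambda>k. Y k \<omega>) N)"
      unfolding N_def by (simp add: ac_simps)
    then show ?thesis unfolding S_def image_prod_mset_multiplicity .
  qed
  have S: "finite S" "S \<subseteq> I" unfolding S_def N_def using assms by auto
  have indep_powers: "indep_vars (\<lambda>_. borel) (\<lambda>k \<omega>. Y k \<omega> ^ count N k) S"
    using indep_vars_compose2[OF indep_vars_subset[OF indep S(2)], of "\<lambda>k t. t ^ count N k" "\<lambda>_. borel"]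
    by simp
  have int: "integrable M (\<lambda>\<omega>. Y k \<omega> ^ count N k)" if "k \<in> S" for k
    using std_normal_power_integral(1) normal S(2) that by auto
  show "integrable M (\<lambda>\<omega>. Y a \<omega> * Y b \<omega> * Y c \<omega> * Y e \<omega>)"
    unfolding prod using indep_vars_integrable[OF S(1) indep_powers int] by simp
  have "(\<integral>\<omega>. Y a \<omega> * Y b \<omega> * Y c \<omega> * Y e \<omega> \<partial>M) = (\<Prod>k\<in>S. \<integral>\<omega>. Y k \<omega> ^ count N k \<partial>M)"
    unfolding prod using indep_vars_lebesgue_integral[OF S(1) indep_powers int] by simp
  also have "\<dots> = (\<Prod>k\<in>S. m (count N k))"
    unfolding m_def using std_normal_power_integral(2) normal S(2) by (intro prod.cong) auto
  also have "\<dots> = of_bool (a = b) * of_bool (c = e) + of_bool (a = c) * of_bool (b = e) + of_bool (a = e) * of_bool (b = c)"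
    unfolding S_def N_def
    by (cases "a = b"; cases "a = c"; cases "a = e"; cases "b = c"; cases "b = e"; cases "c = e")
       (simp_all add: m insert_commute)
  finally show "(\<integral>\<omega>. Y a \<omega> * Y b \<omega> * Y c \<omega> * Y e \<omega> \<partial>M)
         = of_bool (a = b) * of_bool (c = e) + of_bool (a = c) * of_bool (b = e) + of_bool (a = e) * of_bool (b = c)" .
qed

lemma expectation_kron_circulant_gram:
  assumes "d > 0"
    and indep: "indep_vars (\<lambda>_. borel) (\<lambda>j \<omega>. X \<omega> j) {0..<d}"
    and normal: "\<forall>j<d. distributed M lborel (\<lambda>\<omega>. X \<omega> j) std_normal_density"
  shows "pexp M (\<lambda>\<omega>. kron (circulant_gram d (X \<omega>)) (circulant_gram d (X \<omega>))) (a, b) (j, j') / (real d)\<^sup>2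
       = delta_mod d (int j - int a) * delta_mod d (int j' - int b)
         + (delta_mod d ((int j - int a) - (int j' - int b)) + delta_mod d ((int j - int a) + (int j' - int b))) / real d"
proof -
  define ci where "ci a m = (a + d - m mod d) mod d" for a m
  define \<delta> :: "int \<Rightarrow> real" where "\<delta> = delta_mod d"
  have ci: "ci a m < d" for a m
    unfolding ci_def using assms(1) by simp
  have ci_eq: "of_bool (ci a m = ci b n) = \<delta> ((int a - int m) - (int b - int n))" if "m < d" "n < d" for a b m n
    unfolding ci_def \<delta>_def delta_mod_def circulant_index_eq[OF that] ..
  have entry: "kron (circulant_gram d x) (circulant_gram d x) (a, b) (j, j')
      = (\<Sum>m<d. \<Sum>n<d. x (ci a m) * x (ci j m) * x (ci b n) * x (ci j' n))" for x
    unfolding kron_def mat_mult_def mat_transpose_def circulant_def ci_def sum_product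
    by (simp add: mult.assoc)
  have isserlis: "(\<integral>\<omega>. X \<omega> (ci a m) * X \<omega> (ci j m) * X \<omega> (ci b n) * X \<omega> (ci j' n) \<partial>M)
      = \<delta> (int a - int j) * \<delta> (int b - int j')
        + \<delta> ((int a - int m) - (int b - int n)) * \<delta> ((int j - int m) - (int j' - int n))
        + \<delta> ((int a - int m) - (int j' - int n)) * \<delta> ((int j - int m) - (int b - int n))"
    if "m < d" "n < d" for m n
    using std_normal_fourth_moment(2)[of "\<lambda>j \<omega>. X \<omega> j" "{0..<d}"] indep normal
    by (simp add: ci ci_eq[OF that(1) that(1)] ci_eq[OF that(2) that(2)] ci_eq[OF that])
  have flip: "\<delta> (int a - int j) = \<delta> (int j - int a)" "\<delta> (int b - int j') = \<delta> (int j' - int b)"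
    "\<delta> ((int j - int a) - (int b - int j')) = \<delta> ((int j - int a) + (int j' - int b))"
    using delta_mod_uminus[of d "int j - int a"] delta_mod_uminus[of d "int j' - int b"]
    by (simp_all add: \<delta>_def algebra_simps)
  have "pexp M (\<lambda>\<omega>. kron (circulant_gram d (X \<omega>)) (circulant_gram d (X \<omega>))) (a, b) (j, j')
      = (\<Sum>m<d. \<Sum>n<d. \<integral>\<omega>. X \<omega> (ci a m) * X \<omega> (ci j m) * X \<omega> (ci b n) * X \<omega> (ci j' n) \<partial>M)"
    unfolding pexp_def entry
    using std_normal_fourth_moment(1)[of "\<lambda>j \<omega>. X \<omega> j" "{0..<d}"] indep normal ci
    by (simp add: Bochner_Integration.integral_sum)
  also have "\<dots> = (real d)\<^sup>2 * \<delta> (int j - int a) * \<delta> (int j' - int b)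
      + real d * \<delta> ((int j - int a) - (int j' - int b)) + real d * \<delta> ((int j - int a) + (int j' - int b))"
    by (simp add: isserlis sum.distrib sum_sum_delta_mod_diff[OF assms(1)] flip[unfolded \<delta>_def] \<delta>_def power2_eq_square)
  finally show ?thesis
    using assms(1) by (simp add: \<delta>_def field_simps power2_eq_square)
qed

end

section \<open>The discrete Fourier transform\<close>

definition unity_root :: "nat \<Rightarrow> int \<Rightarrow> complex" where
  "unity_root d n = cis (2 * pi * of_int n / of_nat d)"

lemma unity_root_add: "unity_root d (m + n) = unity_root d m * unity_root d n"
  unfolding unity_root_def cis_mult by (simp add: add_divide_distrib algebra_simps)

lemma cnj_unity_root: "cnj (unity_root d n) = unity_root d (- n)"
  unfolding unity_root_def cis_cnj by simp

lemma unity_root_eq_1_iff: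
  assumes "d > 0"
  shows "unity_root d n = 1 \<longleftrightarrow> int d dvd n"
proof -
  have "unity_root d n = 1 \<longleftrightarrow> (\<exists>m::int. 2 * pi * of_int n / of_nat d = of_int m * (2 * pi))"
    unfolding unity_root_def cis_eq_1_iff ..
  also have "\<dots> \<longleftrightarrow> (\<exists>m::int. n = m * int d)"
  proof -
    have "2 * pi * of_int n / of_nat d = of_int m * (2 * pi) \<longleftrightarrow> real_of_int n = real_of_int (m * int d)" for m
      using assms by (auto simp: field_simps)
    then show ?thesis by (simp only: of_int_eq_iff)
  qed
  finally show ?thesis by (auto simp: dvd_def mult.commute)
qed

lemma unity_root_periodic:
  assumes "d > 0" "int d dvd (m - n)"
  shows "unity_root d m = unity_root d n"
  using unity_root_add[of d "m - n" n] unity_root_eq_1_iff[OF assms(1)] assms(2) by simp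

lemma unity_root_mult_periodic:
  assumes "d > 0" "int d dvd (x - y)"
  shows "unity_root d (x * n) = unity_root d (y * n)"
  by (rule unity_root_periodic[OF assms(1)])
    (use assms(2) in \<open>simp add: left_diff_distrib[symmetric]\<close>)

lemma unity_root_sum:
  assumes "d > 0"
  shows "(\<Sum>k<d. unity_root d (int k * n)) = of_nat d * delta_mod d n"
proof (cases "int d dvd n")
  case True
  then have "unity_root d (int k * n) = 1" for k
    using unity_root_eq_1_iff[OF assms] by simp
  then show ?thesis
    using True by (simp add: delta_mod_def)
next
  case False
  have pow: "unity_root d (int k * n) = unity_root d n ^ k" for k
    unfolding unity_root_def Complex.DeMoivre by (rule arg_cong[where f = cis]) simp
  have "unity_root d n \<noteq> 1" using False unity_root_eq_1_iff[OF assms] by simp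
  then have "(\<Sum>k<d. unity_root d n ^ k) = (unity_root d n ^ d - 1) / (unity_root d n - 1)"
    by (rule geometric_sum)
  also have "unity_root d n ^ d = 1"
    using unity_root_eq_1_iff[OF assms, of "int d * n"] pow[of d] by simp
  finally show ?thesis using False by (simp add: pow delta_mod_def)
qed

lemma dft_unity_root: "dft d j k = unity_root d (- (int j * int k)) / complex_of_real (sqrt (real d))"
  unfolding dft_def unity_root_def cis_conv_exp by (simp add: field_simps)

lemma cnj_dft_unity_root: "cnj (dft d j k) = unity_root d (int j * int k) / complex_of_real (sqrt (real d))"
  unfolding dft_unity_root by (simp add: cnj_unity_root)

lemma dft_commute: "dft d j k = dft d k j"
  unfolding dft_def by (simp add: ac_simps)

lemma of_real_sqrt_mult_self: "complex_of_real (sqrt (real d)) * complex_of_real (sqrt (real d)) = of_nat d"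
  by (simp flip: of_real_mult)

lemma dft_dot_delta_mod:
  assumes "d > 0"
  shows "dft_dot d i j = delta_mod d (int i + int j)"
proof -
  have "dft d i k * dft d j k = unity_root d (int k * - (int i + int j)) / of_nat d" for k
    unfolding dft_unity_root of_real_sqrt_mult_self[symmetric]
    by (simp add: unity_root_add[symmetric] algebra_simps)
  then show ?thesis
    unfolding dft_dot_def using assms delta_mod_uminus[of d "int i + int j"]
    by (simp add: unity_root_sum flip: sum_divide_distrib)
qed

abbreviation dft2 :: "nat \<Rightarrow> nat \<times> nat \<Rightarrow> nat \<times> nat \<Rightarrow> complex" where
  "dft2 d \<equiv> kron (dft d) (dft d)"

abbreviation dft2_cnj :: "nat \<Rightarrow> nat \<times> nat \<Rightarrow> nat \<times> nat \<Rightarrow> complex" where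
  "dft2_cnj d \<equiv> \<lambda>r c. cnj (dft2 d r c)"

lemma dft2_square:
  assumes "d > 0"
  shows "pmat_mult (pidx d) (dft2 d) (dft2 d) (r0, r1) (c0, c1) = delta_mod d (int r0 + int c0) * delta_mod d (int r1 + int c1)"
proof -
  have "mat_mult d (dft d) (dft d) r c = delta_mod d (int r + int c)" for r c
    unfolding mat_mult_def dft_commute[of d _ c] dft_dot_delta_mod[OF assms, symmetric] dft_dot_def ..
  moreover have "pmat_mult (pidx d) (dft2 d) (dft2 d) = kron (mat_mult d (dft d) (dft d)) (mat_mult d (dft d) (dft d))"
    by (rule kron_mat_mult[symmetric])
  ultimately show ?thesis
    by (simp add: kron_def)
qed

lemma dft2_square_mult_Mmat:
  assumes "d > 0"
  shows "pmat_mult (pidx d) (dft2 d) (dft2 d) (r0, r1) (c0, c1) * Mmat d (r0, r1) (c0, c1)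
       = delta_mod d (int r0 + int c0) * delta_mod d (int r1 + int c1)
         * (1 + delta_mod d (int r0 + int r1) + delta_mod d (int r0 - int r1))"
proof (cases "int d dvd (int r0 + int c0) \<and> int d dvd (int r1 + int c1)")
  case True
  then have dvd: "int d dvd (int r0 + int c0) + (int r1 + int c1)"
    by auto
  have "delta_mod d (int c0 + int c1) = (delta_mod d (int r0 + int r1) :: complex)"
    by (subst delta_mod_uminus[symmetric], rule delta_mod_cong) (use dvd in \<open>simp add: algebra_simps\<close>)
  moreover have "delta_mod d (int r0 + int c1) = (delta_mod d (int r0 - int r1) :: complex)"
    by (rule delta_mod_cong) (use True in \<open>simp add: algebra_simps\<close>)
  moreover have "delta_mod d (int c0 + int r1) = (delta_mod d (int r0 - int r1) :: complex)"
    by (subst delta_mod_uminus[symmetric], rule delta_mod_cong) (use True in \<open>simp add: algebra_simps\<close>)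
  ultimately show ?thesis
    using True assms unfolding dft2_square[OF assms] Mmat_def
    by (simp add: dft_dot_delta_mod delta_mod_def add.commute)
next
  case False
  then show ?thesis
    unfolding dft2_square[OF assms] by (auto simp: delta_mod_def)
qed

lemma sum_delta_mod_cnj_dft:
  assumes "d > 0"
  shows "(\<Sum>c<d. delta_mod d (int r + int c) * cnj (dft d c j)) = dft d r j"
proof -
  have "(\<Sum>c<d. delta_mod d (int r + int c) * (unity_root d (int c * int j) / complex_of_real (sqrt (real d))))
      = unity_root d (- int r * int j) / complex_of_real (sqrt (real d))"
    by (rule sum_delta_mod_periodic[OF assms, where h = "\<lambda>c. unity_root d (c * int j) / complex_of_real (sqrt (real d))"])
      (simp add: unity_root_mult_periodic[OF assms])
  then show ?thesis
    unfolding cnj_dft_unity_root by (simp add: dft_unity_root)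
qed

lemma Mmat_mask_times_dft2_cnj:
  assumes "d > 0"
  shows "pmat_mult (pidx d) (\<lambda>r c. pmat_mult (pidx d) (dft2 d) (dft2 d) r c * Mmat d r c) (dft2_cnj d) (r0, r1) (j, j')
       = (1 + delta_mod d (int r0 + int r1) + delta_mod d (int r0 - int r1)) * dft2 d (r0, r1) (j, j')"
proof -
  define g :: complex where "g = 1 + delta_mod d (int r0 + int r1) + delta_mod d (int r0 - int r1)"
  have "pmat_mult (pidx d) (\<lambda>r c. pmat_mult (pidx d) (dft2 d) (dft2 d) r c * Mmat d r c) (dft2_cnj d) (r0, r1) (j, j')
      = (\<Sum>c0<d. \<Sum>c1<d. g * ((delta_mod d (int r0 + int c0) * cnj (dft d c0 j))
                                   * (delta_mod d (int r1 + int c1) * cnj (dft d c1 j'))))"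
    unfolding pmat_mult_def[of _ _ "dft2_cnj d"] sum_pidx dft2_square_mult_Mmat[OF assms]
    by (simp add: kron_def g_def mult_ac)
  also have "\<dots> = g * ((\<Sum>c0<d. delta_mod d (int r0 + int c0) * cnj (dft d c0 j))
             * (\<Sum>c1<d. delta_mod d (int r1 + int c1) * cnj (dft d c1 j')))"
    unfolding sum_product by (simp only: sum_distrib_left)
  finally show ?thesis
    unfolding sum_delta_mod_cnj_dft[OF assms] by (simp add: g_def kron_def)
qed

lemma sum_sum_unity_root_weighted:
  assumes "d > 0"
  shows "(\<Sum>r0<d. \<Sum>r1<d. (1 + delta_mod d (int r0 + int r1) + delta_mod d (int r0 - int r1))
            * (unity_root d (int r0 * \<alpha>) * unity_root d (int r1 * \<beta>)))
       = of_nat d * of_nat d * delta_mod d \<alpha> * delta_mod d \<beta>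
         + of_nat d * (delta_mod d (\<alpha> - \<beta>) + delta_mod d (\<alpha> + \<beta>))"
proof -
  have plus: "(\<Sum>r1<d. delta_mod d (int r0 + int r1) * unity_root d (int r1 * \<beta>)) = unity_root d (- int r0 * \<beta>)" for r0
    by (rule sum_delta_mod_periodic[OF assms, where h = "\<lambda>c. unity_root d (c * \<beta>)"])
      (rule unity_root_mult_periodic[OF assms])
  have minus: "(\<Sum>r1<d. delta_mod d (int r0 - int r1) * unity_root d (int r1 * \<beta>)) = unity_root d (int r0 * \<beta>)" for r0
  proof -
    have "(\<Sum>r1<d. delta_mod d (int r0 - int r1) * unity_root d (int r1 * \<beta>))
        = (\<Sum>r1<d. delta_mod d (- int r0 + int r1) * unity_root d (int r1 * \<beta>))"
      by (simp only: delta_mod_uminus[of d "int r0 - int r1" for r1, symmetric] minus_diff_eq uminus_add_conv_diff)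
    also have "\<dots> = unity_root d (- (- int r0) * \<beta>)"
      by (rule sum_delta_mod_periodic[OF assms, where h = "\<lambda>c. unity_root d (c * \<beta>)"])
        (rule unity_root_mult_periodic[OF assms])
    finally show ?thesis by simp
  qed
  have "(\<Sum>r0<d. \<Sum>r1<d. (1 + delta_mod d (int r0 + int r1) + delta_mod d (int r0 - int r1))
            * (unity_root d (int r0 * \<alpha>) * unity_root d (int r1 * \<beta>)))
      = (\<Sum>r0<d. unity_root d (int r0 * \<alpha>) * ((\<Sum>r1<d. unity_root d (int r1 * \<beta>))
          + (\<Sum>r1<d. delta_mod d (int r0 + int r1) * unity_root d (int r1 * \<beta>))
          + (\<Sum>r1<d. delta_mod d (int r0 - int r1) * unity_root d (int r1 * \<beta>))))"
    by (intro sum.cong refl) (simp add: sum_distrib_left sum.distrib algebra_simps)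
  also have "\<dots> = (\<Sum>r0<d. unity_root d (int r0 * \<alpha>)
          * (of_nat d * delta_mod d \<beta> + unity_root d (- int r0 * \<beta>) + unity_root d (int r0 * \<beta>)))"
    unfolding plus minus unity_root_sum[OF assms] ..
  also have "\<dots> = of_nat d * delta_mod d \<beta> * (\<Sum>r0<d. unity_root d (int r0 * \<alpha>))
      + (\<Sum>r0<d. unity_root d (int r0 * (\<alpha> - \<beta>))) + (\<Sum>r0<d. unity_root d (int r0 * (\<alpha> + \<beta>)))"
    by (simp add: sum.distrib sum_distrib_left unity_root_add[symmetric] algebra_simps)
  also have "\<dots> = of_nat d * of_nat d * delta_mod d \<alpha> * delta_mod d \<beta>
         + of_nat d * (delta_mod d (\<alpha> - \<beta>) + delta_mod d (\<alpha> + \<beta>))"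
    unfolding unity_root_sum[OF assms] by (simp add: algebra_simps)
  finally show ?thesis .
qed

lemma dft2_cnj_Mmat_mask_dft2_cnj:
  assumes "d > 0"
  shows "pmat_mult (pidx d) (dft2_cnj d)
           (pmat_mult (pidx d) (\<lambda>r c. pmat_mult (pidx d) (dft2 d) (dft2 d) r c * Mmat d r c) (dft2_cnj d)) (a, b) (j, j')
       = delta_mod d (int j - int a) * delta_mod d (int j' - int b)
         + (delta_mod d ((int j - int a) - (int j' - int b)) + delta_mod d ((int j - int a) + (int j' - int b))) / of_nat d"
proof -
  define \<alpha> where "\<alpha> = int a - int j"
  define \<beta> where "\<beta> = int b - int j'"
  have twiddle: "cnj (dft d a r) * dft d r j = unity_root d (int r * \<alpha>) / of_nat d"
    "cnj (dft d b r) * dft d r j' = unity_root d (int r * \<beta>) / of_nat d" for r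
    unfolding cnj_dft_unity_root unfolding dft_unity_root \<alpha>_def \<beta>_def of_real_sqrt_mult_self[symmetric]
    by (simp_all add: unity_root_add[symmetric] algebra_simps)
  have regroup: "dft2_cnj d (a, b) (r0, r1) * (g * dft2 d (r0, r1) (j, j'))
      = g * ((cnj (dft d a r0) * dft d r0 j) * (cnj (dft d b r1) * dft d r1 j'))" for g r0 r1
    by (simp add: kron_def mult_ac)
  have "pmat_mult (pidx d) (dft2_cnj d)
           (pmat_mult (pidx d) (\<lambda>r c. pmat_mult (pidx d) (dft2 d) (dft2 d) r c * Mmat d r c) (dft2_cnj d)) (a, b) (j, j')
      = (\<Sum>r0<d. \<Sum>r1<d. dft2_cnj d (a, b) (r0, r1)
            * ((1 + delta_mod d (int r0 + int r1) + delta_mod d (int r0 - int r1)) * dft2 d (r0, r1) (j, j')))"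
    unfolding pmat_mult_def[of _ "dft2_cnj d"] sum_pidx Mmat_mask_times_dft2_cnj[OF assms] ..
  also have "\<dots> = (\<Sum>r0<d. \<Sum>r1<d. (1 + delta_mod d (int r0 + int r1) + delta_mod d (int r0 - int r1))
            * (unity_root d (int r0 * \<alpha>) * unity_root d (int r1 * \<beta>))) / (of_nat d * of_nat d)"
    unfolding regroup twiddle sum_divide_distrib by simp
  also have "\<dots> = delta_mod d \<alpha> * delta_mod d \<beta> + (delta_mod d (\<alpha> - \<beta>) + delta_mod d (\<alpha> + \<beta>)) / of_nat d"
    unfolding sum_sum_unity_root_weighted[OF assms] using assms by (simp add: field_simps)
  finally have "pmat_mult (pidx d) (dft2_cnj d)
           (pmat_mult (pidx d) (\<lambda>r c. pmat_mult (pidx d) (dft2 d) (dft2 d) r c * Mmat d r c) (dft2_cnj d)) (a, b) (j, j')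
      = delta_mod d \<alpha> * delta_mod d \<beta> + (delta_mod d (\<alpha> - \<beta>) + delta_mod d (\<alpha> + \<beta>)) / of_nat d" .
  moreover have "\<alpha> - \<beta> = - ((int j - int a) - (int j' - int b))" "\<alpha> + \<beta> = - ((int j - int a) + (int j' - int b))"
    "\<alpha> = - (int j - int a)" "\<beta> = - (int j' - int b)"
    unfolding \<alpha>_def \<beta>_def by simp_all
  ultimately show ?thesis
    by (simp only: delta_mod_uminus)
qed

lemma (in prob_space) fisher_bar_gaussian:
  assumes "d > 0"
    and indep: "indep_vars (\<lambda>_. borel) (\<lambda>j \<omega>. X \<omega> j) {0..<d}"
    and normal: "\<forall>j<d. distributed M lborel (\<lambda>\<omega>. X \<omega> j) std_normal_density"
  shows "complex_of_real (fisher_bar M d (\<lambda>u. u) W X r (j, j')) =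
       pmat_mult (pidx d)
         (pmat_mult (pidx d)
           (pmat_mult (pidx d) (kron (\<lambda>a b. complex_of_real (W a b)) (\<lambda>a b. complex_of_real (W a b))) (dft2_cnj d))
           (\<lambda>r c. pmat_mult (pidx d) (dft2 d) (dft2 d) r c * Mmat d r c))
         (dft2_cnj d) r (j, j')"
proof -
  have fourth: "\<forall>a<d. \<forall>b<d. \<forall>c<d. \<forall>e<d. integrable M (\<lambda>\<omega>. X \<omega> a * X \<omega> b * X \<omega> c * X \<omega> e)"
    using std_normal_fourth_moment(1)[of "\<lambda>j \<omega>. X \<omega> j" "{0..<d}"] indep normal by simp
  have "complex_of_real (fisher_bar M d (\<lambda>u. u) W X r (j, j'))
      = pmat_mult (pidx d) (\<lambda>r c. complex_of_real (kron W W r c))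
          (\<lambda>k c. complex_of_real
             (pexp M (\<lambda>\<omega>. kron (circulant_gram d (X \<omega>)) (circulant_gram d (X \<omega>))) k c / (real d)\<^sup>2)) r (j, j')"
    unfolding fisher_bar_linear[OF assms(1) fourth] of_real_pmat_mult ..
  also have "\<dots> = pmat_mult (pidx d) (\<lambda>r c. complex_of_real (kron W W r c))
      (pmat_mult (pidx d) (dft2_cnj d)
         (pmat_mult (pidx d) (\<lambda>r c. pmat_mult (pidx d) (dft2 d) (dft2 d) r c * Mmat d r c) (dft2_cnj d))) r (j, j')"
  proof (rule pmat_mult_cong)
    fix k :: "nat \<times> nat"
    obtain a b where "k = (a, b)" by fastforce
    then show "complex_of_real
             (pexp M (\<lambda>\<omega>. kron (circulant_gram d (X \<omega>)) (circulant_gram d (X \<omega>))) k (j, j') / (real d)\<^sup>2)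
        = pmat_mult (pidx d) (dft2_cnj d)
            (pmat_mult (pidx d) (\<lambda>r c. pmat_mult (pidx d) (dft2 d) (dft2 d) r c * Mmat d r c) (dft2_cnj d)) k (j, j')"
      using expectation_kron_circulant_gram[OF assms] dft2_cnj_Mmat_mask_dft2_cnj[OF assms(1)]
      by (simp add: of_real_delta_mod)
  qed
  also have "\<dots> = pmat_mult (pidx d)
         (pmat_mult (pidx d)
           (pmat_mult (pidx d) (kron (\<lambda>a b. complex_of_real (W a b)) (\<lambda>a b. complex_of_real (W a b))) (dft2_cnj d))
           (\<lambda>r c. pmat_mult (pidx d) (dft2 d) (dft2 d) r c * Mmat d r c))
         (dft2_cnj d) r (j, j')"
    by (simp only: pmat_mult_assoc kron_of_real)
  finally show ?thesis .
qed

theorem theorem5p2: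
  fixes M :: "'w measure" and X :: "'w \<Rightarrow> nat \<Rightarrow> real"
    and \<sigma> \<sigma>' :: "real \<Rightarrow> real" and W :: "nat \<Rightarrow> nat \<Rightarrow> real" and p d :: nat
  assumes "prob_space M"
    and "d > 0"
    and "\<forall>j<d. (\<lambda>\<omega>. X \<omega> j) \<in> borel_measurable M"
    and "\<forall>u. (\<sigma> has_real_derivative \<sigma>' u) (at u)"
  shows
    "(\<forall>i<p. \<forall>i'<p. \<forall>j<d. \<forall>j'<d.
       fisher M d \<sigma>' W X (i, i') (j, j') =
       pexp M (\<lambda>\<omega>. pmat_mult {(0, 0)}
                 (kron (colvec (\<lambda>k. \<sigma>' (mat_vec d W (X \<omega>) k))) (colvec (\<lambda>k. \<sigma>' (mat_vec d W (X \<omega>) k))))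
                 (pmat_transpose (kron (colvec (X \<omega>)) (colvec (X \<omega>))))) (i, i') (j, j')) \<and>
    (\<sigma> = (\<lambda>u. u\<^sup>2 / 2) \<and>
     (\<forall>a<d. \<forall>b<d. \<forall>c<d. \<forall>e<d. integrable M (\<lambda>\<omega>. X \<omega> a * X \<omega> b * X \<omega> c * X \<omega> e)) \<longrightarrow>
     (\<forall>i<p. \<forall>i'<p. \<forall>j<d. \<forall>j'<d.
       fisher M d \<sigma>' W X (i, i') (j, j') =
       pmat_mult (pidx d) (kron W W)
         (pexp M (\<lambda>\<omega>. kron (mat_mult 1 (colvec (X \<omega>)) (mat_transpose (colvec (X \<omega>))))
                            (mat_mult 1 (colvec (X \<omega>)) (mat_transpose (colvec (X \<omega>)))))) (i, i') (j, j'))) \<and>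
    (\<sigma> = (\<lambda>u. u\<^sup>2 / 2) \<and>
     (\<forall>a<d. \<forall>b<d. \<forall>c<d. \<forall>e<d. integrable M (\<lambda>\<omega>. X \<omega> a * X \<omega> b * X \<omega> c * X \<omega> e)) \<longrightarrow>
     (\<forall>i<p. \<forall>i'<p. \<forall>j<d. \<forall>j'<d.
       fisher_bar M d \<sigma>' W X (i, i') (j, j') =
       pmat_mult (pidx d) (kron W W)
         (\<lambda>r c. pexp M (\<lambda>\<omega>. kron (mat_mult d (circulant d (X \<omega>)) (mat_transpose (circulant d (X \<omega>))))
                                  (mat_mult d (circulant d (X \<omega>)) (mat_transpose (circulant d (X \<omega>))))) r c
                 / (real d)\<^sup>2) (i, i') (j, j'))) \<and>
    (\<sigma> = (\<lambda>u. u\<^sup>2 / 2) \<and>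
     prob_space.indep_vars M (\<lambda>_. borel) (\<lambda>j \<omega>. X \<omega> j) {0..<d} \<and>
     (\<forall>j<d. distributed M lborel (\<lambda>\<omega>. X \<omega> j) std_normal_density) \<longrightarrow>
     (\<forall>i<p. \<forall>i'<p. \<forall>j<d. \<forall>j'<d.
       complex_of_real (fisher_bar M d \<sigma>' W X (i, i') (j, j')) =
       pmat_mult (pidx d)
         (pmat_mult (pidx d)
           (pmat_mult (pidx d) (kron (\<lambda>a b. complex_of_real (W a b)) (\<lambda>a b. complex_of_real (W a b)))
              (\<lambda>r c. cnj (kron (dft d) (dft d) r c)))
           (\<lambda>r c. pmat_mult (pidx d) (kron (dft d) (dft d)) (kron (dft d) (dft d)) r c * Mmat d r c))
         (\<lambda>r c. cnj (kron (dft d) (dft d) r c)) (i, i') (j, j')))"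
proof -
  interpret prob_space M by (rule assms(1))
  show ?thesis
  proof (cases "\<sigma> = (\<lambda>u. u\<^sup>2 / 2)")
    case True
    then have "\<sigma>' = (\<lambda>u. u)"
      using derivative_of_half_square assms(4) by blast
    then show ?thesis
      using fisher_eq_pexp_kron fisher_linear fisher_bar_linear[OF assms(2)] fisher_bar_gaussian[OF assms(2)]
      by auto
  next
    case False
    then show ?thesis using fisher_eq_pexp_kron by blast
  qed
qed

end
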